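(* Let $F:\mathbb R^n\to\mathbb R^n$ be a monotone $\ell$-Lipschitz operator. Let $z^{(0)},z^{(-1)}\in\mathbb R^n$ and suppose there is $z^*$ with $F(z^* )=0$ and $\max\{\|z^*-z^{(0)}\|,\|z^*-z^{(-1)}\|\}\le D$. Let $\eta<\frac1{\ell\sqrt{10}}$ and let $z^{(t)}$ be the iterates $z^{(t+1)}=z^{(t)}-2\eta F(z^{(t)})+\eta F(z^{(t-1)})$, $t\ge0$. Then for every integer $T\ge1$, $$\min_{0\le t\le T-1}\|F(z^{(t)})\|\le\frac{4D}{\eta\sqrt T\sqrt{1-10\eta^2\ell^2}}.$$ More generally, for every integer $S\ge1$ with $S<T/3$, $$\min_{0\le t\le T-S}\ \max_{0\le s<S}\|F(z^{(t+s)})\|\le\frac{6D}{\eta\sqrt{T/S}\sqrt{1-10\eta^2\ell^2}}.$$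
   Context: $F$ is monotone if $\langle F(z')-F(z),z'-z\rangle\ge0$ for all $z,z'$. *)

theory Defs
  imports "HOL-Analysis.Analysis"
begin

definition monotone_op :: "('a::real_inner \<Rightarrow> 'a) \<Rightarrow> bool" where
  "monotone_op F \<longleftrightarrow> (\<forall>z z'. inner (F z' - F z) (z' - z) \<ge> 0)"

end

(*
  With the extrapolated points w t = z t + \<eta> F (z (t - 1)) the optimistic iteration reads
  w (t + 1) = w t - \<eta> F (z t), a gradient step evaluated at z t.  Monotonicity and F zs = 0 give
    |w (t + 1) - zs|^2 \<le> |w t - zs|^2 - \<eta>^2 |F (z (t - 1))|^2 + \<eta>^2 |F (z t) - F (z (t - 1))|^2,
  and by the Lipschitz bound and the recursion the last term is at most
  5 \<eta>^4 L^2 (|F (z (t - 1))|^2 + |F (z (t - 2))|^2).  Telescoping, every such term is charged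
  twice, so \<eta>^2 (1 - 10 \<eta>^2 L^2) \<Sum>t |F (z t)|^2 is bounded by the initial potential, which is at
  most 4 D^2.  A minimum of squares, or of block maxima of squares, is at most their average.
*)

theory Submission
  imports Defs
begin

lemma monotone_op_inner_zero_ge:
  assumes "monotone_op F" and "F zs = 0"
  shows "0 \<le> inner (F x) (x - zs)"
  using assms unfolding monotone_op_def by (metis diff_zero)

lemma power2_norm_step_le:
  fixes a b x :: "'a::real_inner" and \<eta> :: real
  assumes "0 \<le> inner a x" and "0 \<le> \<eta>"
  shows "(norm (x + \<eta> *\<^sub>R b - \<eta> *\<^sub>R a))\<^sup>2
           \<le> (norm (x + \<eta> *\<^sub>R b))\<^sup>2 - \<eta>\<^sup>2 * (norm b)\<^sup>2 + \<eta>\<^sup>2 * (norm (a - b))\<^sup>2"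
proof -
  have "(norm (x + \<eta> *\<^sub>R b - \<eta> *\<^sub>R a))\<^sup>2
      = (norm (x + \<eta> *\<^sub>R b))\<^sup>2 - \<eta>\<^sup>2 * (norm b)\<^sup>2 + \<eta>\<^sup>2 * (norm (a - b))\<^sup>2 - 2 * \<eta> * inner a x"
    unfolding power2_norm_eq_inner
    by (simp add: inner_add_left inner_add_right inner_diff_left inner_diff_right inner_commute
        algebra_simps power2_eq_square)
  moreover have "0 \<le> 2 * \<eta> * inner a x"
    using assms by simp
  ultimately show ?thesis
    by linarith
qed

lemma power2_le_5_sum_power2:
  fixes p q r :: real
  assumes "0 \<le> r" and "r \<le> 2 * p + q"
  shows "r\<^sup>2 \<le> 5 * (p\<^sup>2 + q\<^sup>2)"
proof -
  have "r\<^sup>2 \<le> (2 * p + q)\<^sup>2"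
    using assms by (intro power_mono) auto
  moreover have "5 * (p\<^sup>2 + q\<^sup>2) - (2 * p + q)\<^sup>2 = (p - 2 * q)\<^sup>2"
    by (simp add: power2_eq_square algebra_simps)
  moreover have "0 \<le> (p - 2 * q)\<^sup>2"
    by simp
  ultimately show ?thesis
    by linarith
qed

lemma scaleR_2_mult_eq_add: "(2 * c) *\<^sub>R (x::'a::real_vector) = c *\<^sub>R x + c *\<^sub>R x"
  by (simp only: mult_2 scaleR_left_distrib)

lemma weighted_sum_le_of_potential_descent:
  fixes P a :: "nat \<Rightarrow> real"
  assumes a_nonneg: "\<And>n. 0 \<le> a n" and P_nonneg: "\<And>n. 0 \<le> P n" and K_nonneg: "0 \<le> K"
    and first: "P 1 \<le> P 0 - h * a 0 + E"
    and later: "\<And>n. 1 \<le> n \<Longrightarrow> P (Suc n) \<le> P n - h * a n + K * (a n + a (n - 1))"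
  shows "(h - 2 * K) * (\<Sum>i\<le>N. a i) \<le> P 0 + E"
proof -
  have "P (Suc N) + (h - 2 * K) * (\<Sum>i\<le>N. a i) + K * a N \<le> P 0 + E"
  proof (induction N)
    case 0
    have "0 \<le> K * a 0"
      using K_nonneg a_nonneg by simp
    with first show ?case
      by (simp add: algebra_simps)
  next
    case (Suc N)
    with later[of "Suc N"] show ?case
      by (simp add: algebra_simps)
  qed
  moreover have "0 \<le> K * a N"
    using K_nonneg a_nonneg by simp
  ultimately show ?thesis
    using P_nonneg[of "Suc N"] by linarith
qed

lemma mult_power2_le_sum_power2_blocks:
  fixes g :: "nat \<Rightarrow> real"
  assumes "0 \<le> m" and block: "\<And>j. j < k \<Longrightarrow> \<exists>i\<in>{j * S ..< j * S + S}. m \<le> g i"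
  shows "real k * m\<^sup>2 \<le> (\<Sum>i<k * S. (g i)\<^sup>2)"
proof -
  have "m\<^sup>2 \<le> (\<Sum>i\<in>{j * S ..< j * S + S}. (g i)\<^sup>2)" if j: "j < k" for j
  proof -
    obtain i where i: "i \<in> {j * S ..< j * S + S}" "m \<le> g i"
      using block[OF j] by blast
    have "m\<^sup>2 \<le> (g i)\<^sup>2"
      using i \<open>0 \<le> m\<close> by (intro power_mono) auto
    also have "\<dots> \<le> (\<Sum>i\<in>{j * S ..< j * S + S}. (g i)\<^sup>2)"
      using i by (intro member_le_sum) auto
    finally show ?thesis .
  qed
  then have "(\<Sum>j<k. m\<^sup>2) \<le> (\<Sum>j<k. \<Sum>i\<in>{j * S ..< j * S + S}. (g i)\<^sup>2)"
    by (intro sum_mono) auto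
  also have "\<dots> = (\<Sum>i<k * S. (g i)\<^sup>2)"
    by (rule sum.nat_group)
  finally show ?thesis
    by simp
qed

locale optimistic_gradient =
  fixes F :: "'a::real_inner \<Rightarrow> 'a"
    and z :: "int \<Rightarrow> 'a"
    and zs :: 'a
    and L \<eta> D :: real
  assumes mono: "monotone_op F"
    and lip: "L-lipschitz_on UNIV F"
    and L_pos: "L > 0"
    and zero: "F zs = 0"
    and dist_bd: "max (norm (zs - z 0)) (norm (zs - z (-1))) \<le> D"
    and eta_pos: "\<eta> > 0"
    and eta_bd: "\<eta> < 1 / (L * sqrt 10)"
    and iter: "\<And>t. t \<ge> 0 \<Longrightarrow> z (t + 1) = z t - (2 * \<eta>) *\<^sub>R F (z t) + \<eta> *\<^sub>R F (z (t - 1))"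
begin

lemma norm_F_diff_le: "norm (F x - F y) \<le> L * norm (x - y)"
  using lipschitz_onD[OF lip, of x y] by (simp add: dist_norm)

lemma dist_initial_le: "norm (z 0 - zs) \<le> D" "norm (z (-1) - zs) \<le> D"
  using dist_bd by (auto simp: norm_minus_commute)

lemma D_nonneg: "0 \<le> D"
  using dist_initial_le(1) norm_ge_zero order_trans by blast

lemma step_size_sq_lt: "10 * \<eta>\<^sup>2 * L\<^sup>2 < 1"
proof -
  have "\<eta> * L * sqrt 10 < 1"
    using eta_bd L_pos by (simp add: field_simps)
  then have "(\<eta> * L * sqrt 10)\<^sup>2 < 1\<^sup>2"
    using eta_pos L_pos by (intro power_strict_mono) auto
  then show ?thesis
    by (simp add: power_mult_distrib)
qed

definition extrapolated :: "int \<Rightarrow> 'a" where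
  "extrapolated t = z t + \<eta> *\<^sub>R F (z (t - 1))"

lemma extrapolated_step:
  assumes "t \<ge> 0"
  shows "extrapolated (t + 1) = extrapolated t - \<eta> *\<^sub>R F (z t)"
  unfolding extrapolated_def iter[OF assms] scaleR_2_mult_eq_add by simp

lemma potential_step:
  assumes "t \<ge> 0"
  shows "(norm (extrapolated (t + 1) - zs))\<^sup>2 \<le> (norm (extrapolated t - zs))\<^sup>2
           - \<eta>\<^sup>2 * (norm (F (z (t - 1))))\<^sup>2 + \<eta>\<^sup>2 * (norm (F (z t) - F (z (t - 1))))\<^sup>2"
proof -
  have "extrapolated t - zs = (z t - zs) + \<eta> *\<^sub>R F (z (t - 1))"
    by (simp add: extrapolated_def algebra_simps)
  moreover have "extrapolated (t + 1) - zs = (z t - zs) + \<eta> *\<^sub>R F (z (t - 1)) - \<eta> *\<^sub>R F (z t)"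
    unfolding extrapolated_step[OF assms] by (simp add: extrapolated_def algebra_simps)
  ultimately show ?thesis
    by (simp only:) (intro power2_norm_step_le monotone_op_inner_zero_ge mono zero less_imp_le eta_pos)
qed

lemma F_diff_initial_le: "norm (F (z 0) - F (z (-1))) \<le> 2 * L * D"
proof -
  have "norm (z 0 - z (-1)) \<le> 2 * D"
    using dist_initial_le norm_triangle_ineq4[of "z 0 - zs" "z (-1) - zs"] by simp
  then have "L * norm (z 0 - z (-1)) \<le> L * (2 * D)"
    using L_pos by (intro mult_left_mono) auto
  then show ?thesis
    using norm_F_diff_le[of "z 0" "z (-1)"] by simp
qed

lemma F_diff_le:
  assumes "t \<ge> 1"
  shows "norm (F (z t) - F (z (t - 1)))
           \<le> 2 * (L * \<eta> * norm (F (z (t - 1)))) + L * \<eta> * norm (F (z (t - 2)))"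
proof -
  have "z t - z (t - 1) = \<eta> *\<^sub>R F (z (t - 2)) - 2 *\<^sub>R (\<eta> *\<^sub>R F (z (t - 1)))"
    using iter[of "t - 1"] assms by (simp add: scaleR_2_mult_eq_add scaleR_2 algebra_simps)
  then have "norm (z t - z (t - 1)) \<le> \<eta> * norm (F (z (t - 2))) + 2 * (\<eta> * norm (F (z (t - 1))))"
    using eta_pos norm_triangle_ineq4[of "\<eta> *\<^sub>R F (z (t - 2))" "2 *\<^sub>R (\<eta> *\<^sub>R F (z (t - 1)))"]
    by simp
  then have "L * norm (z t - z (t - 1)) \<le> L * (\<eta> * norm (F (z (t - 2))) + 2 * (\<eta> * norm (F (z (t - 1)))))"
    using L_pos by (intro mult_left_mono) auto
  then show ?thesis
    using norm_F_diff_le[of "z t" "z (t - 1)"] by (simp add: algebra_simps)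
qed

lemma initial_potential_le:
  "(norm (extrapolated 0 - zs))\<^sup>2 + \<eta>\<^sup>2 * (2 * L * D)\<^sup>2 \<le> 4 * D\<^sup>2"
proof -
  define e where "e = \<eta> * L"
  have e: "0 < e" "10 * e\<^sup>2 < 1"
    using eta_pos L_pos step_size_sq_lt by (simp_all add: e_def power_mult_distrib)
  then have "e < 1"
    using abs_square_less_1[of e] by simp
  have "norm (extrapolated 0 - zs) \<le> norm (z 0 - zs) + \<eta> * norm (F (z (-1)) - F zs)"
    using norm_triangle_ineq[of "z 0 - zs" "\<eta> *\<^sub>R F (z (-1))"] eta_pos zero
    by (simp add: extrapolated_def algebra_simps)
  also have "\<dots> \<le> D + \<eta> * (L * D)"
    using norm_F_diff_le[of "z (-1)" zs] dist_initial_le eta_pos L_pos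
    by (intro add_mono mult_left_mono) (auto intro: order_trans)
  finally have "(norm (extrapolated 0 - zs))\<^sup>2 \<le> (D * (1 + e))\<^sup>2"
    by (intro power_mono) (simp_all add: e_def algebra_simps)
  moreover have "(D * (1 + e))\<^sup>2 + \<eta>\<^sup>2 * (2 * L * D)\<^sup>2 = D\<^sup>2 * (1 + 2 * e + 5 * e\<^sup>2)"
    by (simp add: e_def power2_eq_square algebra_simps)
  moreover have "D\<^sup>2 * (1 + 2 * e + 5 * e\<^sup>2) \<le> D\<^sup>2 * 4"
    using e \<open>e < 1\<close> by (intro mult_left_mono) auto
  ultimately show ?thesis
    by linarith
qed

lemma sum_power2_F_le:
  "(\<Sum>t<N. (norm (F (z (int t))))\<^sup>2) \<le> 4 * D\<^sup>2 / (\<eta>\<^sup>2 * (1 - 10 * \<eta>\<^sup>2 * L\<^sup>2))"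
proof -
  define a where "a n = (norm (F (z (int n - 1))))\<^sup>2" for n
  define P where "P n = (norm (extrapolated (int n) - zs))\<^sup>2" for n
  define K where "K = 5 * \<eta>^4 * L\<^sup>2"
  have "(\<eta>\<^sup>2 - 2 * K) * (\<Sum>i\<le>N. a i) \<le> P 0 + \<eta>\<^sup>2 * (2 * L * D)\<^sup>2"
  proof (rule weighted_sum_le_of_potential_descent)
    show "0 \<le> a n" "0 \<le> P n" for n
      by (simp_all add: a_def P_def)
    show "0 \<le> K"
      by (simp add: K_def)
    have "(norm (F (z 0) - F (z (-1))))\<^sup>2 \<le> (2 * L * D)\<^sup>2"
      using F_diff_initial_le by (intro power_mono) auto
    then show "P 1 \<le> P 0 - \<eta>\<^sup>2 * a 0 + \<eta>\<^sup>2 * (2 * L * D)\<^sup>2"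
      using potential_step[of 0] mult_left_mono[OF _ zero_le_power2[of \<eta>]]
      by (fastforce simp: a_def P_def)
  next
    fix n :: nat
    assume "1 \<le> n"
    have "(norm (F (z (int n)) - F (z (int n - 1))))\<^sup>2
            \<le> 5 * ((L * \<eta> * norm (F (z (int n - 1))))\<^sup>2 + (L * \<eta> * norm (F (z (int n - 2))))\<^sup>2)"
      using \<open>1 \<le> n\<close> by (intro power2_le_5_sum_power2 F_diff_le) auto
    also have "\<dots> = 5 * \<eta>\<^sup>2 * L\<^sup>2 * (a n + a (n - 1))"
      using \<open>1 \<le> n\<close> by (simp add: a_def of_nat_diff power_mult_distrib algebra_simps)
    finally have "\<eta>\<^sup>2 * (norm (F (z (int n)) - F (z (int n - 1))))\<^sup>2 \<le> K * (a n + a (n - 1))"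
      using mult_left_mono[OF _ zero_le_power2[of \<eta>]]
      by (fastforce simp: K_def power4_eq_xxxx power2_eq_square algebra_simps)
    then show "P (Suc n) \<le> P n - \<eta>\<^sup>2 * a n + K * (a n + a (n - 1))"
      using potential_step[of n] by (simp add: a_def P_def add.commute)
  qed
  also have "\<dots> \<le> 4 * D\<^sup>2"
    using initial_potential_le by (simp add: P_def)
  finally have sum_a: "(\<Sum>i\<le>N. a i) * (\<eta>\<^sup>2 * (1 - 10 * \<eta>\<^sup>2 * L\<^sup>2)) \<le> 4 * D\<^sup>2"
    by (simp add: K_def power4_eq_xxxx power2_eq_square algebra_simps)
  have "(\<Sum>i\<le>N. a i) = a 0 + (\<Sum>t<N. (norm (F (z (int t))))\<^sup>2)"
    unfolding lessThan_Suc_atMost[symmetric] sum.lessThan_Suc_shift by (simp add: a_def)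
  then have "(\<Sum>t<N. (norm (F (z (int t))))\<^sup>2) \<le> (\<Sum>i\<le>N. a i)"
    by (simp add: a_def)
  moreover have pos: "0 < \<eta>\<^sup>2 * (1 - 10 * \<eta>\<^sup>2 * L\<^sup>2)"
    using eta_pos step_size_sq_lt by simp
  ultimately have "(\<Sum>t<N. (norm (F (z (int t))))\<^sup>2) * (\<eta>\<^sup>2 * (1 - 10 * \<eta>\<^sup>2 * L\<^sup>2)) \<le> 4 * D\<^sup>2"
    using sum_a mult_right_mono[OF _ less_imp_le[OF pos]] by (meson order_trans)
  then show ?thesis
    using pos by (simp add: pos_le_divide_eq)
qed

lemma le_bound_of_mult_power2_le:
  assumes "0 \<le> m" and "0 < k"
    and "k * m\<^sup>2 \<le> 4 * D\<^sup>2 / (\<eta>\<^sup>2 * (1 - 10 * \<eta>\<^sup>2 * L\<^sup>2))"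
  shows "m \<le> 2 * D / (\<eta> * sqrt k * sqrt (1 - 10 * \<eta>\<^sup>2 * L\<^sup>2))"
proof -
  define c where "c = 1 - 10 * \<eta>\<^sup>2 * L\<^sup>2"
  have "0 < c"
    using step_size_sq_lt by (simp add: c_def)
  define B where "B = 4 * D\<^sup>2 / (\<eta>\<^sup>2 * c)"
  have "k * m\<^sup>2 \<le> B"
    using assms(3) by (simp add: B_def c_def)
  then have "m\<^sup>2 \<le> B / k"
    using \<open>0 < k\<close> by (simp add: pos_le_divide_eq mult.commute)
  also have "\<dots> = (2 * D / (\<eta> * sqrt k * sqrt c))\<^sup>2"
    using \<open>0 < c\<close> \<open>0 < k\<close> by (simp add: B_def power_divide power_mult_distrib)
  finally have "m\<^sup>2 \<le> (2 * D / (\<eta> * sqrt k * sqrt c))\<^sup>2" .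
  moreover have "0 \<le> 2 * D / (\<eta> * sqrt k * sqrt c)"
    using D_nonneg eta_pos \<open>0 < c\<close> \<open>0 < k\<close> by simp
  ultimately show ?thesis
    unfolding c_def by (rule power2_le_imp_le)
qed

lemma Min_norm_F_le:
  assumes "1 \<le> T"
  shows "Min ((\<lambda>t. norm (F (z t))) ` {0 .. int T - 1})
           \<le> 4 * D / (\<eta> * sqrt (real T) * sqrt (1 - 10 * \<eta>\<^sup>2 * L\<^sup>2))"
proof -
  define m where "m = Min ((\<lambda>t. norm (F (z t))) ` {0 .. int T - 1})"
  have m_le: "m \<le> norm (F (z (int j)))" if "j < T" for j
    unfolding m_def using that by (intro Min_le) auto
  have "0 \<le> m"
    unfolding m_def using assms by (subst Min_ge_iff) auto
  have "real T * m\<^sup>2 \<le> (\<Sum>i<T * 1. (norm (F (z (int i))))\<^sup>2)"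
    using \<open>0 \<le> m\<close> m_le by (intro mult_power2_le_sum_power2_blocks) auto
  also have "\<dots> \<le> 4 * D\<^sup>2 / (\<eta>\<^sup>2 * (1 - 10 * \<eta>\<^sup>2 * L\<^sup>2))"
    by (rule sum_power2_F_le)
  finally have "m \<le> 2 * D / (\<eta> * sqrt (real T) * sqrt (1 - 10 * \<eta>\<^sup>2 * L\<^sup>2))"
    using \<open>0 \<le> m\<close> assms by (intro le_bound_of_mult_power2_le) auto
  also have "\<dots> \<le> 4 * D / (\<eta> * sqrt (real T) * sqrt (1 - 10 * \<eta>\<^sup>2 * L\<^sup>2))"
    using D_nonneg eta_pos step_size_sq_lt assms by (intro divide_right_mono) auto
  finally show ?thesis
    by (simp add: m_def)
qed

lemma Min_Max_norm_F_le:
  assumes "1 \<le> S" and "S \<le> T"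
  shows "Min ((\<lambda>t. Max ((\<lambda>s. norm (F (z (t + s)))) ` {0 ..< int S})) ` {0 .. int T - int S})
           \<le> 6 * D / (\<eta> * sqrt (real T / real S) * sqrt (1 - 10 * \<eta>\<^sup>2 * L\<^sup>2))"
proof -
  define M where "M t = Max ((\<lambda>s. norm (F (z (t + s)))) ` {0 ..< int S})" for t
  define m where "m = Min (M ` {0 .. int T - int S})"
  define k where "k = T div S"
  have "1 \<le> k"
    using assms by (simp add: k_def div_greater_zero_iff Suc_le_eq)
  have "T = k * S + T mod S" "T mod S < S"
    using assms by (simp_all add: k_def)
  then have "T < (k + 1) * S"
    by simp
  have M_nonneg: "0 \<le> M t" for t
    unfolding M_def using assms by (subst Max_ge_iff) auto
  have "0 \<le> m"
    unfolding m_def using assms M_nonneg by (subst Min_ge_iff) auto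
  have "\<exists>i\<in>{j * S ..< j * S + S}. m \<le> norm (F (z (int i)))" if "j < k" for j
  proof -
    have "j * S + S \<le> k * S"
      using that by (metis Suc_leI add.commute mult_Suc mult_le_mono1)
    also have "\<dots> \<le> T"
      by (simp add: k_def div_times_less_eq_dividend)
    finally have "int (j * S) \<in> {0 .. int T - int S}"
      unfolding atLeastAtMost_iff by linarith
    then have "m \<le> M (int (j * S))"
      unfolding m_def by (intro Min_le) auto
    moreover have "M (int (j * S)) \<in> (\<lambda>s. norm (F (z (int (j * S) + s)))) ` {0 ..< int S}"
      unfolding M_def using assms by (intro Max_in) auto
    then obtain s where "0 \<le> s" "s < int S" "M (int (j * S)) = norm (F (z (int (j * S) + s)))"
      by auto
    then have "nat s < S" "M (int (j * S)) = norm (F (z (int (j * S + nat s))))"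
      by auto
    ultimately show ?thesis
      by (intro bexI[of _ "j * S + nat s"]) auto
  qed
  then have "real k * m\<^sup>2 \<le> (\<Sum>i<k * S. (norm (F (z (int i))))\<^sup>2)"
    using \<open>0 \<le> m\<close> by (intro mult_power2_le_sum_power2_blocks)
  also have "\<dots> \<le> 4 * D\<^sup>2 / (\<eta>\<^sup>2 * (1 - 10 * \<eta>\<^sup>2 * L\<^sup>2))"
    by (rule sum_power2_F_le)
  finally have "m \<le> 2 * D / (\<eta> * sqrt (real k) * sqrt (1 - 10 * \<eta>\<^sup>2 * L\<^sup>2))"
    using \<open>0 \<le> m\<close> \<open>1 \<le> k\<close> by (intro le_bound_of_mult_power2_le) auto
  also have "\<dots> = 6 * D / (\<eta> * (3 * sqrt (real k)) * sqrt (1 - 10 * \<eta>\<^sup>2 * L\<^sup>2))"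
    by simp
  also have "\<dots> \<le> 6 * D / (\<eta> * sqrt (real T / real S) * sqrt (1 - 10 * \<eta>\<^sup>2 * L\<^sup>2))"
  proof -
    have "real T < (real k + 1) * real S"
      using \<open>T < (k + 1) * S\<close> by (metis of_nat_1 of_nat_add of_nat_less_iff of_nat_mult)
    also have "\<dots> \<le> 9 * real k * real S"
      using \<open>1 \<le> k\<close> by (intro mult_right_mono) auto
    finally have "sqrt (real T / real S) \<le> sqrt (9 * real k)"
      using assms by (simp add: divide_le_eq)
    also have "\<dots> = 3 * sqrt (real k)"
      using real_sqrt_mult[of "3\<^sup>2" "real k"] by simp
    finally have "sqrt (real T / real S) \<le> 3 * sqrt (real k)" .
    moreover have "0 < real T / real S"
      using assms by simp
    ultimately show ?thesis
      using D_nonneg eta_pos step_size_sq_lt \<open>1 \<le> k\<close>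
      by (intro divide_left_mono mult_right_mono mult_left_mono mult_pos_pos) auto
  qed
  finally show ?thesis
    by (simp add: m_def M_def)
qed

end

theorem lemma11:
  fixes F :: "'a::euclidean_space \<Rightarrow> 'a"
    and z :: "int \<Rightarrow> 'a"
    and zs :: 'a
    and L \<eta> D :: real
  assumes mono: "monotone_op F"
    and lip: "L-lipschitz_on UNIV F"
    and l_pos: "L > 0"
    and zero: "F zs = 0"
    and dist_bd: "max (norm (zs - z 0)) (norm (zs - z (-1))) \<le> D"
    and eta_pos: "\<eta> > 0"
    and eta_bd: "\<eta> < 1 / (L * sqrt 10)"
    and iter: "\<And>t. t \<ge> 0 \<Longrightarrow> z (t + 1) = z t - (2 * \<eta>) *\<^sub>R F (z t) + \<eta> *\<^sub>R F (z (t - 1))"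
  shows "(\<forall>T::nat. T \<ge> 1 \<longrightarrow>
            Min ((\<lambda>t. norm (F (z t))) ` {0 .. int T - 1})
              \<le> 4 * D / (\<eta> * sqrt (real T) * sqrt (1 - 10 * \<eta>\<^sup>2 * L\<^sup>2)))
       \<and> (\<forall>T S::nat. S \<ge> 1 \<longrightarrow> real S < real T / 3 \<longrightarrow>
            Min ((\<lambda>t. Max ((\<lambda>s. norm (F (z (t + s)))) ` {0 ..< int S})) ` {0 .. int T - int S})
              \<le> 6 * D / (\<eta> * sqrt (real T / real S) * sqrt (1 - 10 * \<eta>\<^sup>2 * L\<^sup>2)))"
proof -
  interpret optimistic_gradient F z zs L \<eta> D
    using assms by unfold_locales
  show ?thesis
    using Min_norm_F_le Min_Max_norm_F_le by force
qed

end
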